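(* Let $G=(V,E)$ be a strongly biconnected directed graph and let $U\subseteq E$ be such that the directed subgraph $G_1=(V,U)$ is strongly connected but the underlying undirected graph of $G_1$ is not biconnected. Let $(v,w)\in E\setminus U$ be an edge such that $v$ and $w$ are not in the same strongly biconnected component of $G_1$. Then the directed subgraph $(V,U\cup\{(v,w)\})$ has fewer strongly biconnected components than $G_1$.
   Context: A directed graph is strongly biconnected if it is strongly connected and its underlying undirected graph (obtained by ignoring edge directions) is biconnected. A strongly biconnected component of a directed graph is a maximal strongly biconnected subgraph of it (in the sense of Wu and Grumbach); two vertices are in the same strongly biconnected component if some strongly biconnected component contains both. *)

theory Defs
  imports Main
begin

definition digraph :: "'a set \<Rightarrow> ('a \<times> 'a) set \<Rightarrow> bool" where
  "digraph V E \<longleftrightarrow> E \<subseteq> V \<times> V"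

definition strongly_connected :: "'a set \<Rightarrow> ('a \<times> 'a) set \<Rightarrow> bool" where
  "strongly_connected V E \<longleftrightarrow> (\<forall>x\<in>V. \<forall>y\<in>V. (x, y) \<in> (E \<inter> (V \<times> V))\<^sup>*)"

definition ug_edges :: "('a \<times> 'a) set \<Rightarrow> ('a \<times> 'a) set" where
  "ug_edges E = {(x, y). x \<noteq> y \<and> ((x, y) \<in> E \<or> (y, x) \<in> E)}"

definition ug_connected :: "'a set \<Rightarrow> ('a \<times> 'a) set \<Rightarrow> bool" where
  "ug_connected V E \<longleftrightarrow> (\<forall>x\<in>V. \<forall>y\<in>V. (x, y) \<in> (ug_edges E \<inter> (V \<times> V))\<^sup>*)"

definition ug_biconnected :: "'a set \<Rightarrow> ('a \<times> 'a) set \<Rightarrow> bool" where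
  "ug_biconnected V E \<longleftrightarrow> ug_connected V E \<and>
     (\<forall>z\<in>V. ug_connected (V - {z}) (E \<inter> ((V - {z}) \<times> (V - {z}))))"

definition strongly_biconnected :: "'a set \<Rightarrow> ('a \<times> 'a) set \<Rightarrow> bool" where
  "strongly_biconnected V E \<longleftrightarrow> strongly_connected V E \<and> ug_biconnected V E"

definition subgraph :: "'a set \<Rightarrow> ('a \<times> 'a) set \<Rightarrow> 'a set \<Rightarrow> ('a \<times> 'a) set \<Rightarrow> bool" where
  "subgraph V' E' V E \<longleftrightarrow> V' \<subseteq> V \<and> E' \<subseteq> E \<and> E' \<subseteq> V' \<times> V'"

definition sbcs :: "'a set \<Rightarrow> ('a \<times> 'a) set \<Rightarrow> ('a set \<times> ('a \<times> 'a) set) set" where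
  "sbcs V E = {(V', E'). subgraph V' E' V E \<and> strongly_biconnected V' E' \<and>
      (\<forall>V'' E''. subgraph V'' E'' V E \<and> strongly_biconnected V'' E'' \<and>
                 V' \<subseteq> V'' \<and> E' \<subseteq> E'' \<longrightarrow> V'' = V' \<and> E'' = E')}"

definition same_sbc :: "'a set \<Rightarrow> ('a \<times> 'a) set \<Rightarrow> 'a \<Rightarrow> 'a \<Rightarrow> bool" where
  "same_sbc V E v w \<longleftrightarrow> (\<exists>(V', E') \<in> sbcs V E. v \<in> V' \<and> w \<in> V')"

end

theory Submission
  imports Defs "HOL-Library.Product_Order" "HOL-Library.Transitive_Closure_Table"
begin

(* Two strongly biconnected subgraphs with two common vertices have a strongly biconnected
   union, so distinct strongly biconnected components share at most one vertex; and every
   simple directed cycle is strongly biconnected, so the endpoints of an edge lying on a cycle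
   are in a common component.
   Adding (v, w) closes a cycle with a path from w to v in U, so v and w lie in a new component N,
   and every other new component avoids (v, w) and is already a component of U. Now N contains
   an edge (u, v) of U entering v and an edge (w, u') of U leaving w. The old components containing
   u, v and w, u' are distinct, as v and w are not in a common component, and neither survives,
   since a new component sharing two vertices with N is N itself, which contains both v and w.
   Hence at least two old components are replaced by the single component N. *)

lemma ug_edges_mono: "E \<subseteq> F \<Longrightarrow> ug_edges E \<subseteq> ug_edges F"
  by (auto simp: ug_edges_def)

lemma ug_edges_Restr: "ug_edges (Restr E X) = Restr (ug_edges E) X"
  by (auto simp: ug_edges_def)

(* Connectivity of the underlying undirected graph is treated as strong connectivity of the
   symmetric relation ug_edges E: this is exactly what ug_connected unfolds to. *)
lemma ug_biconnected_iff:
  "ug_biconnected V E \<longleftrightarrow>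
     strongly_connected V (ug_edges E) \<and> (\<forall>z\<in>V. strongly_connected (V - {z}) (ug_edges E))"
  by (simp add: ug_biconnected_def ug_connected_def strongly_connected_def ug_edges_Restr
      Int_assoc)

lemma strongly_connected_mono:
  "strongly_connected X R \<Longrightarrow> R \<subseteq> S \<Longrightarrow> strongly_connected X S"
  unfolding strongly_connected_def by (meson Int_mono order_refl rtrancl_mono subsetD)

lemma strongly_connected_Restr:
  assumes "Y \<subseteq> X"
  shows "strongly_connected Y (Restr R X) \<longleftrightarrow> strongly_connected Y R"
proof -
  have "Restr (Restr R X) Y = Restr R Y" using assms by blast
  then show ?thesis by (simp add: strongly_connected_def)
qed

lemma strongly_connected_rtrancl:
  "strongly_connected X R \<Longrightarrow> x \<in> X \<Longrightarrow> y \<in> X \<Longrightarrow> (x, y) \<in> R\<^sup>*"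
  unfolding strongly_connected_def by (meson Int_lower1 rtrancl_mono subsetD)

lemma strongly_connected_obtain_in_edge:
  assumes "strongly_connected X R" and "x \<in> X" and "y \<in> X" and "x \<noteq> y"
  obtains u where "(u, y) \<in> Restr R X" and "u \<noteq> y"
proof -
  have "(x, y) \<in> (Restr R X - Id)\<^sup>*"
    using assms(1-3) by (simp add: strongly_connected_def rtrancl_r_diff_Id)
  then show thesis using assms(4) that by (blast elim: rtranclE)
qed

lemma strongly_connected_obtain_out_edge:
  assumes "strongly_connected X R" and "x \<in> X" and "y \<in> X" and "x \<noteq> y"
  obtains u where "(x, u) \<in> Restr R X" and "u \<noteq> x"
proof -
  have "(x, y) \<in> (Restr R X - Id)\<^sup>*"
    using assms(1-3) by (simp add: strongly_connected_def rtrancl_r_diff_Id)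
  then show thesis using assms(4) that by (blast elim: converse_rtranclE)
qed

lemma strongly_connected_Un:
  assumes X: "strongly_connected X R" and Y: "strongly_connected Y R" and "X \<inter> Y \<noteq> {}"
  shows "strongly_connected (X \<union> Y) R"
proof -
  let ?S = "Restr R (X \<union> Y)"
  obtain c where c: "c \<in> X" "c \<in> Y" using \<open>X \<inter> Y \<noteq> {}\<close> by blast
  have "(Restr R X)\<^sup>* \<subseteq> ?S\<^sup>*" "(Restr R Y)\<^sup>* \<subseteq> ?S\<^sup>*"
    by (auto intro!: rtrancl_mono)
  then have "(x, c) \<in> ?S\<^sup>* \<and> (c, x) \<in> ?S\<^sup>*" if "x \<in> X \<union> Y" for x
    using that c X Y unfolding strongly_connected_def by blast
  then show ?thesis unfolding strongly_connected_def by (meson rtrancl_trans)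
qed

lemma strongly_biconnected_Un:
  assumes A: "strongly_biconnected A EA" and B: "strongly_biconnected B EB"
    and "x \<in> A \<inter> B" "y \<in> A \<inter> B" "x \<noteq> y"
  shows "strongly_biconnected (A \<union> B) (EA \<union> EB)"
proof -
  have ug: "ug_edges EA \<subseteq> ug_edges (EA \<union> EB)" "ug_edges EB \<subseteq> ug_edges (EA \<union> EB)"
    by (simp_all add: ug_edges_mono)
  have "strongly_connected (A - {z} \<union> (B - {z})) (ug_edges (EA \<union> EB))" for z
  proof (rule strongly_connected_Un)
    show "strongly_connected (A - {z}) (ug_edges (EA \<union> EB))"
      using A ug(1) by (cases "z \<in> A") (auto simp: strongly_biconnected_def ug_biconnected_iff
          intro: strongly_connected_mono)
    show "strongly_connected (B - {z}) (ug_edges (EA \<union> EB))"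
      using B ug(2) by (cases "z \<in> B") (auto simp: strongly_biconnected_def ug_biconnected_iff
          intro: strongly_connected_mono)
    show "(A - {z}) \<inter> (B - {z}) \<noteq> {}" using assms(3-5) by blast
  qed
  moreover have "strongly_connected (A \<union> B) (EA \<union> EB)"
    using A B assms(3) by (auto simp: strongly_biconnected_def
        intro!: strongly_connected_Un intro: strongly_connected_mono)
  moreover have "strongly_connected (A \<union> B) (ug_edges (EA \<union> EB))"
    using A B assms(3) ug by (auto simp: strongly_biconnected_def ug_biconnected_iff
        intro!: strongly_connected_Un intro: strongly_connected_mono)
  ultimately show ?thesis by (simp add: strongly_biconnected_def ug_biconnected_iff Un_Diff)
qed

lemma ug_connected_if_rooted:
  assumes "r \<in> X" and reach: "\<forall>y\<in>X. (r, y) \<in> (Restr R X)\<^sup>*"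
  shows "strongly_connected X (ug_edges R)"
proof -
  let ?S = "Restr (ug_edges R) X"
  have "Restr R X \<subseteq> ?S \<union> Id" by (auto simp: ug_edges_def)
  then have "(Restr R X)\<^sup>* \<subseteq> ?S\<^sup>*" by (metis rtrancl_mono rtrancl_reflcl)
  then have from_root: "\<forall>y\<in>X. (r, y) \<in> ?S\<^sup>*" using reach by blast
  have "sym (?S\<^sup>*)" by (intro sym_rtrancl) (auto simp: sym_def ug_edges_def)
  then show ?thesis
    unfolding strongly_connected_def using from_root by (meson rtrancl_trans symD)
qed

lemma ug_connected_if_strongly_connected:
  assumes "strongly_connected X R"
  shows "strongly_connected X (ug_edges R)"
proof (cases "X = {}")
  case False
  then obtain r where "r \<in> X" by blast
  moreover have "\<forall>y\<in>X. (r, y) \<in> (Restr R X)\<^sup>*"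
    using assms \<open>r \<in> X\<close> by (simp add: strongly_connected_def)
  ultimately show ?thesis by (rule ug_connected_if_rooted)
qed (simp add: strongly_connected_def)

lemma successively_rtrancl:
  assumes "successively (\<lambda>a b. (a, b) \<in> R) (x # xs)" and "y \<in> set (x # xs)"
  shows "(x, y) \<in> (Restr R (set (x # xs)))\<^sup>*"
  using assms
proof (induction xs arbitrary: x)
  case (Cons x' xs)
  let ?P = "set (x # x' # xs)"
  show ?case
  proof (cases "y = x")
    case False
    then have "(x', y) \<in> (Restr R (set (x' # xs)))\<^sup>*"
      using Cons by simp
    moreover have "Restr R (set (x' # xs)) \<subseteq> Restr R ?P" by auto
    ultimately have "(x', y) \<in> (Restr R ?P)\<^sup>*" using rtrancl_mono by blast
    moreover have "(x, x') \<in> Restr R ?P" using Cons.prems(1) by simp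
    ultimately show ?thesis by (meson converse_rtrancl_into_rtrancl)
  qed simp
qed simp

lemma successively_ug_connected:
  assumes "successively (\<lambda>a b. (a, b) \<in> R) xs"
  shows "strongly_connected (set xs) (ug_edges R)"
proof (cases xs)
  case (Cons x xs')
  then show ?thesis
    using assms successively_rtrancl[of R x xs'] by (intro ug_connected_if_rooted[of x]) auto
qed (simp add: strongly_connected_def)

lemma rtrancl_path_successively:
  "rtrancl_path r x ys y \<Longrightarrow> successively r (x # ys) \<and> last (x # ys) = y"
  by (induction rule: rtrancl_path.induct) (auto simp: successively_Cons)

(* Appending take 1 xs adds the closing edge from the last vertex back to the first. *)
definition cycle :: "('a \<times> 'a) set \<Rightarrow> 'a list \<Rightarrow> bool" where
  "cycle R xs \<longleftrightarrow> distinct xs \<and> successively (\<lambda>a b. (a, b) \<in> R) (xs @ take 1 xs)"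

lemma cycle_rotate_to_head:
  assumes "cycle R xs" and "z \<in> set xs"
  obtains ys where "cycle R (z # ys)" and "set (z # ys) = set xs"
proof -
  obtain as bs where xs: "xs = as @ z # bs" using assms(2) by (meson split_list)
  have "cycle R (z # bs @ as)"
    using assms(1) unfolding xs cycle_def
    by (cases as) (auto simp: successively_append_iff successively_Cons hd_append)
  then show thesis by (rule that) (auto simp: xs)
qed

lemma cycle_through_edge:
  assumes "(a, b) \<in> R" and "(b, a) \<in> R\<^sup>*"
  obtains xs where "cycle R xs" and "a \<in> set xs" and "b \<in> set xs"
proof -
  let ?r = "\<lambda>x y. (x, y) \<in> R"
  have "?r\<^sup>*\<^sup>* b a" using assms(2) by (simp add: rtranclp_rtrancl_eq)
  then obtain zs where "rtrancl_path ?r b zs a" by (auto simp: rtranclp_eq_rtrancl_path)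
  then obtain ys where "rtrancl_path ?r b ys a" and distinct: "distinct (b # ys)"
    by (rule rtrancl_path_distinct)
  then have path: "successively ?r (b # ys)" and last: "last (b # ys) = a"
    using rtrancl_path_successively by fastforce+
  have "successively ?r ((b # ys) @ [b])"
    using path last assms(1) by (subst successively_append_iff) simp
  then have "cycle R (b # ys)" using distinct by (simp add: cycle_def)
  moreover have "a \<in> set (b # ys)" using last by (metis last_in_set list.discI)
  ultimately show thesis using that by simp
qed

lemma cycle_subset_Domain:
  assumes "cycle R xs"
  shows "set xs \<subseteq> Domain R"
proof
  fix z assume "z \<in> set xs"
  then obtain ys where "cycle R (z # ys)" using assms cycle_rotate_to_head by metis
  then have "(z, hd (ys @ [z])) \<in> R" by (simp add: cycle_def successively_Cons)
  then show "z \<in> Domain R" by blast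
qed

lemma cycle_path_from:
  assumes "cycle R xs" and "z \<in> set xs"
  obtains ys where "successively (\<lambda>a b. (a, b) \<in> R) (z # ys)" and "set ys = set xs - {z}"
proof -
  obtain ys where ys: "cycle R (z # ys)" "set (z # ys) = set xs"
    using cycle_rotate_to_head[OF assms] by metis
  then have "successively (\<lambda>a b. (a, b) \<in> R) (z # ys)"
    unfolding cycle_def by (simp add: successively_append_iff del: append_Cons)
  moreover have "set ys = set xs - {z}" using ys by (auto simp: cycle_def)
  ultimately show thesis by (rule that)
qed

lemma cycle_strongly_biconnected:
  assumes "cycle R xs"
  shows "strongly_biconnected (set xs) (Restr R (set xs))"
proof -
  let ?P = "set xs"
  let ?r = "\<lambda>a b. (a, b) \<in> R"
  have "strongly_connected ?P R"
    unfolding strongly_connected_def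
  proof (intro ballI)
    fix x y assume x: "x \<in> ?P" and y: "y \<in> ?P"
    obtain ys where ys: "successively ?r (x # ys)" "set ys = ?P - {x}"
      using cycle_path_from[OF assms x] .
    then have "set (x # ys) = ?P" using x by auto
    then show "(x, y) \<in> (Restr R ?P)\<^sup>*" using successively_rtrancl[OF ys(1)] y by simp
  qed
  then have "strongly_connected ?P (Restr R ?P)" by (simp add: strongly_connected_Restr)
  moreover have "strongly_connected (?P - {z}) (ug_edges (Restr R ?P))" if z: "z \<in> ?P" for z
  proof -
    obtain ys where ys: "successively ?r (z # ys)" "set ys = ?P - {z}"
      using cycle_path_from[OF assms z] .
    then have "successively ?r ys" by (cases ys) simp_all
    then have "strongly_connected (?P - {z}) (ug_edges R)"
      using successively_ug_connected ys(2) by metis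
    then show ?thesis unfolding ug_edges_Restr by (simp add: strongly_connected_Restr)
  qed
  ultimately show ?thesis
    by (simp add: strongly_biconnected_def ug_biconnected_iff ug_connected_if_strongly_connected)
qed

lemma mem_sbcs_iff:
  "(C, F) \<in> sbcs V R \<longleftrightarrow> subgraph C F V R \<and> strongly_biconnected C F \<and>
     (\<forall>C' F'. subgraph C' F' V R \<and> strongly_biconnected C' F' \<and> C \<subseteq> C' \<and> F \<subseteq> F'
        \<longrightarrow> C' = C \<and> F' = F)"
  by (simp add: sbcs_def)

lemma sbcsD:
  assumes "(C, F) \<in> sbcs V R"
  shows "subgraph C F V R" and "strongly_biconnected C F"
    and "\<lbrakk>subgraph C' F' V R; strongly_biconnected C' F'; C \<subseteq> C'; F \<subseteq> F'\<rbrakk> \<Longrightarrow> C' = C \<and> F' = F"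
  using assms by (simp_all add: sbcs_def)

lemma finite_subgraphs:
  assumes "finite V"
  shows "finite {(C, F). subgraph C F V R}"
proof (rule finite_subset)
  show "{(C, F). subgraph C F V R} \<subseteq> Pow V \<times> Pow (V \<times> V)" by (auto simp: subgraph_def)
qed (use assms in simp)

lemma finite_sbcs:
  assumes "finite V"
  shows "finite (sbcs V R)"
  by (rule finite_subset[OF _ finite_subgraphs[OF assms]]) (auto simp: sbcs_def)

lemma sbcs_extend:
  assumes "finite V" and "subgraph C F V R" and "strongly_biconnected C F"
  obtains C' F' where "(C', F') \<in> sbcs V R" and "C \<subseteq> C'" and "F \<subseteq> F'"
proof -
  let ?S = "{(C', F'). subgraph C' F' V R \<and> strongly_biconnected C' F'}"
  have "finite ?S" by (rule finite_subset[OF _ finite_subgraphs[OF assms(1)]]) auto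
  moreover have "(C, F) \<in> ?S" using assms(2,3) by simp
  ultimately obtain M where "M \<in> ?S" "(C, F) \<le> M" "\<forall>M'\<in>?S. M \<le> M' \<longrightarrow> M = M'"
    by (meson finite_has_maximal2)
  then obtain C' F' where M: "(C', F') \<in> ?S" "(C, F) \<le> (C', F')"
    and max: "\<forall>M\<in>?S. (C', F') \<le> M \<longrightarrow> (C', F') = M"
    by (cases M) blast
  have "C'' = C' \<and> F'' = F'"
    if "subgraph C'' F'' V R" "strongly_biconnected C'' F''" "C' \<subseteq> C''" "F' \<subseteq> F''" for C'' F''
  proof -
    have "(C'', F'') \<in> ?S" and "(C', F') \<le> (C'', F'')"
      using that by (simp_all add: less_eq_prod_def)
    then show ?thesis using max by blast
  qed
  then have "(C', F') \<in> sbcs V R" using M(1) unfolding mem_sbcs_iff by blast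
  moreover have "C \<subseteq> C'" "F \<subseteq> F'" using M(2) by (simp_all add: less_eq_prod_def)
  ultimately show thesis by (rule that)
qed

lemma sbcs_eq_if_two_common_vertices:
  assumes "(C, F) \<in> sbcs V R" and "(C', F') \<in> sbcs V R"
    and "x \<in> C \<inter> C'" and "y \<in> C \<inter> C'" and "x \<noteq> y"
  shows "(C, F) = (C', F')"
proof -
  have sub: "subgraph (C \<union> C') (F \<union> F') V R"
    using sbcsD(1)[OF assms(1)] sbcsD(1)[OF assms(2)] by (auto simp: subgraph_def)
  have sb: "strongly_biconnected (C \<union> C') (F \<union> F')"
    using sbcsD(2)[OF assms(1)] sbcsD(2)[OF assms(2)] assms(3-5) by (rule strongly_biconnected_Un)
  have "C \<union> C' = C \<and> F \<union> F' = F" by (rule sbcsD(3)[OF assms(1) sub sb]) auto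
  moreover have "C \<union> C' = C' \<and> F \<union> F' = F'" by (rule sbcsD(3)[OF assms(2) sub sb]) auto
  ultimately show ?thesis by blast
qed

lemma sbcs_if_sbcs_of_supergraph:
  assumes "(C, F) \<in> sbcs V R'" and "R \<subseteq> R'" and "F \<subseteq> R"
  shows "(C, F) \<in> sbcs V R"
proof -
  have "subgraph C F V R" using sbcsD(1)[OF assms(1)] assms(3) by (simp add: subgraph_def)
  moreover have "C' = C \<and> F' = F"
    if "subgraph C' F' V R" "strongly_biconnected C' F'" "C \<subseteq> C'" "F \<subseteq> F'" for C' F'
    using that assms(2) by (intro sbcsD(3)[OF assms(1)]) (auto simp: subgraph_def)
  ultimately show ?thesis using sbcsD(2)[OF assms(1)] unfolding mem_sbcs_iff by blast
qed

lemma same_sbc_refl: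
  assumes "finite V" and "v \<in> V"
  shows "same_sbc V R v v"
proof -
  have "subgraph {v} {} V R" using assms(2) by (simp add: subgraph_def)
  moreover have "strongly_biconnected {v} {}"
    by (simp add: strongly_biconnected_def strongly_connected_def ug_biconnected_def
        ug_connected_def)
  ultimately obtain C F where "(C, F) \<in> sbcs V R" "{v} \<subseteq> C"
    using sbcs_extend[OF assms(1)] by metis
  then show ?thesis unfolding same_sbc_def by blast
qed

lemma same_sbc_if_on_cycle:
  assumes "finite V" and "R \<subseteq> V \<times> V" and "(a, b) \<in> R" and "(b, a) \<in> R\<^sup>*"
  shows "same_sbc V R a b"
proof -
  obtain xs where xs: "cycle R xs" "a \<in> set xs" "b \<in> set xs"
    using cycle_through_edge[OF assms(3,4)] .
  have "subgraph (set xs) (Restr R (set xs)) V R"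
    using cycle_subset_Domain[OF xs(1)] assms(2) by (auto simp: subgraph_def)
  then obtain C F where "(C, F) \<in> sbcs V R" "set xs \<subseteq> C"
    using sbcs_extend[OF assms(1) _ cycle_strongly_biconnected[OF xs(1)]] by metis
  then show ?thesis unfolding same_sbc_def using xs(2,3) by blast
qed

lemma card_less_if_two_merged:
  assumes "finite B" and "A - {n} \<subseteq> B - {s, t}" and "s \<in> B" and "t \<in> B" and "s \<noteq> t"
  shows "card A < card B"
proof -
  have "card A \<le> card (insert n (B - {s, t}))"
    using assms(1,2) by (intro card_mono) auto
  also have "\<dots> \<le> Suc (card (B - {s, t}))" using assms(1) by (simp add: card_insert_if)
  also have "\<dots> = Suc (card B - 2)" using assms by (simp add: card_Diff_subset)
  also have "\<dots> < card B"
    using assms card_mono[of B "{s, t}"] by simp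
  finally show ?thesis .
qed

context
  fixes V :: "'a set" and U :: "('a \<times> 'a) set" and v w :: 'a
  assumes finite_V: "finite V" and U_V: "U \<subseteq> V \<times> V" and strongly_connected_U: "strongly_connected V U"
    and v_V: "v \<in> V" and w_V: "w \<in> V" and apart: "\<not> same_sbc V U v w"
begin

lemma endpoints_distinct: "v \<noteq> w"
  using apart same_sbc_refl[OF finite_V v_V] by blast

lemma new_component_exists:
  obtains N NE where "(N, NE) \<in> sbcs V (insert (v, w) U)" and "v \<in> N" and "w \<in> N"
proof -
  have "(w, v) \<in> U\<^sup>*" using strongly_connected_U w_V v_V by (rule strongly_connected_rtrancl)
  then have "(w, v) \<in> (insert (v, w) U)\<^sup>*" using rtrancl_mono[of U] by blast
  then have "same_sbc V (insert (v, w) U) v w"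
    using U_V v_V w_V by (intro same_sbc_if_on_cycle[OF finite_V]) auto
  then show thesis using that unfolding same_sbc_def by blast
qed

lemma other_new_components_old:
  assumes N: "(N, NE) \<in> sbcs V (insert (v, w) U)" "v \<in> N" "w \<in> N"
  shows "sbcs V (insert (v, w) U) - {(N, NE)} \<subseteq> sbcs V U"
proof
  fix S assume S: "S \<in> sbcs V (insert (v, w) U) - {(N, NE)}"
  obtain C F where S_eq: "S = (C, F)" by (cases S)
  have C: "(C, F) \<in> sbcs V (insert (v, w) U)" "(C, F) \<noteq> (N, NE)" using S S_eq by auto
  have "(v, w) \<notin> F"
  proof
    assume "(v, w) \<in> F"
    then have "v \<in> C" "w \<in> C" using sbcsD(1)[OF C(1)] by (auto simp: subgraph_def)
    then show False
      using sbcs_eq_if_two_common_vertices[OF C(1) N(1), of v w] N(2,3) endpoints_distinct C(2)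
      by blast
  qed
  moreover have "F \<subseteq> insert (v, w) U" using sbcsD(1)[OF C(1)] by (simp add: subgraph_def)
  ultimately show "S \<in> sbcs V U"
    using sbcs_if_sbcs_of_supergraph[OF C(1) subset_insertI] S_eq by blast
qed

lemma old_component_lost:
  assumes N: "(N, NE) \<in> sbcs V (insert (v, w) U)" "v \<in> N" "w \<in> N"
    and xy: "(x, y) \<in> U" "x \<noteq> y" "x \<in> N" "y \<in> N"
  obtains C F where "(C, F) \<in> sbcs V U - sbcs V (insert (v, w) U)" and "x \<in> C" and "y \<in> C"
proof -
  have "x \<in> V" "y \<in> V" using xy(1) U_V by auto
  then have "(y, x) \<in> U\<^sup>*" by (intro strongly_connected_rtrancl[OF strongly_connected_U])
  then have "same_sbc V U x y" by (rule same_sbc_if_on_cycle[OF finite_V U_V xy(1)])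
  then obtain C F where C: "(C, F) \<in> sbcs V U" "x \<in> C" "y \<in> C"
    unfolding same_sbc_def by blast
  have "(C, F) \<notin> sbcs V (insert (v, w) U)"
  proof
    assume "(C, F) \<in> sbcs V (insert (v, w) U)"
    then have "(C, F) = (N, NE)"
      using C(2,3) xy(2-4) by (intro sbcs_eq_if_two_common_vertices[OF _ N(1), of _ _ x y]) auto
    then show False using apart C(1) N(2,3) unfolding same_sbc_def by blast
  qed
  then show thesis using C that by blast
qed

lemma card_sbcs_insert_edge_less: "card (sbcs V (insert (v, w) U)) < card (sbcs V U)"
proof -
  let ?G = "insert (v, w) U"
  obtain N NE where N: "(N, NE) \<in> sbcs V ?G" "v \<in> N" "w \<in> N"
    using new_component_exists .
  have NE: "strongly_connected N NE" "NE \<subseteq> ?G"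
    using sbcsD[OF N(1)] by (simp_all add: strongly_biconnected_def subgraph_def)
  obtain u where u: "(u, v) \<in> Restr NE N" "u \<noteq> v"
    using strongly_connected_obtain_in_edge[OF NE(1) N(3,2)] endpoints_distinct by metis
  obtain u' where u': "(w, u') \<in> Restr NE N" "u' \<noteq> w"
    using strongly_connected_obtain_out_edge[OF NE(1) N(3,2)] endpoints_distinct by metis
  have "(u, v) \<in> U" "u \<in> N" and "(w, u') \<in> U" "u' \<in> N" using u u' NE(2) by auto
  obtain C F where C: "(C, F) \<in> sbcs V U - sbcs V ?G" "u \<in> C" "v \<in> C"
    by (rule old_component_lost[OF N \<open>(u, v) \<in> U\<close> u(2) \<open>u \<in> N\<close> N(2)])
  obtain C' F' where C': "(C', F') \<in> sbcs V U - sbcs V ?G" "w \<in> C'" "u' \<in> C'"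
    by (rule old_component_lost[OF N \<open>(w, u') \<in> U\<close> u'(2)[symmetric] N(3) \<open>u' \<in> N\<close>])
  have "(C, F) \<noteq> (C', F')" using apart C(1,3) C'(2) unfolding same_sbc_def by blast
  moreover have "sbcs V ?G - {(N, NE)} \<subseteq> sbcs V U - {(C, F), (C', F')}"
    using other_new_components_old[OF N] C(1) C'(1) by blast
  ultimately show ?thesis
    using C(1) C'(1) card_less_if_two_merged[OF finite_sbcs[OF finite_V]] by blast
qed

end

theorem mainTheorem1:
  fixes V :: "'a set" and E U :: "('a \<times> 'a) set" and v w :: 'a
  assumes "finite V"
    and "digraph V E"
    and "strongly_biconnected V E"
    and "U \<subseteq> E"
    and "strongly_connected V U"
    and "\<not> ug_biconnected V U"
    and "(v, w) \<in> E - U"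
    and "\<not> same_sbc V U v w"
  shows "card (sbcs V (insert (v, w) U)) < card (sbcs V U)"
proof -
  \<comment> \<open>The hypotheses on E only place U, v and w inside V.\<close>
  have "U \<subseteq> V \<times> V" "v \<in> V" "w \<in> V" using assms(2,4,7) by (auto simp: digraph_def)
  then show ?thesis by (rule card_sbcs_insert_edge_less[OF assms(1) _ assms(5) _ _ assms(8)])
qed

end
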